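(* Let $X$ be a strictly convex $C^{(3)}$ curve in the plane $\mathbb{R}^2$, and let $P\in X$. For sufficiently small $h>0$, let $T_P(h)$ and $U_P(h)$ be the areas of the triangles $\triangle AA_1A_2$ and $\triangle BB_1B_2$ associated with $P$ and $h$ as described in the context. Then $$\lim_{h\to 0^+}\frac{T_P(h)}{h\sqrt{h}}=\frac{\sqrt{2}}{\sqrt{\kappa(P)}}\qquad\text{and}\qquad \lim_{h\to 0^+}\frac{U_P(h)}{h\sqrt{h}}=\frac{\sqrt{2}}{2\sqrt{\kappa(P)}},$$ where $\kappa(P)$ is the curvature of $X$ at $P$ with respect to the unit normal $N$ pointing to the convex side.
   Context: A regular plane curve $X$ defined on an open interval is convex if for every point of $X$ the trace of $X$ lies entirely in one closed half-plane determined by the tangent line at that point. A simple convex curve $X$ is called strictly convex if it is of class $C^{(3)}$ and has positive curvature $\kappa$ with respect to the unit normal $N$ pointing to the convex side, i.e. $\kappa(s)=\langle X''(s),N(X(s))\rangle>0$ for an arclength parametrization $X(s)$. For $P=A\in X$ and sufficiently small $h>0$, let $m$ be the line through $P+hN(P)$ parallel to the tangent line $\ell$ of $X$ at $P$, and let $A_1,A_2$ be the two points where $m$ meets $X$. Let $\ell_1,\ell_2$ be the tangent lines of $X$ at $A_1,A_2$, and let $B=\ell_1\cap\ell_2$, $B_1=\ell\cap\ell_1$, $B_2=\ell\cap\ell_2$. Define $T_P(h)=|\triangle AA_1A_2|$ and $U_P(h)=|\triangle BB_1B_2|$ (areas). *)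

theory Defs
  imports "HOL-Analysis.Analysis"
begin

definition rot90 :: "real^2 \<Rightarrow> real^2" where
  "rot90 x = (\<chi> i. if i = 1 then - (x$2) else x$1)"

definition cross2 :: "real^2 \<Rightarrow> real^2 \<Rightarrow> real" where
  "cross2 x y = x$1 * y$2 - x$2 * y$1"

definition tri_area :: "real^2 \<Rightarrow> real^2 \<Rightarrow> real^2 \<Rightarrow> real" where
  "tri_area a b c = \<bar>cross2 (b - a) (c - a)\<bar> / 2"

definition line_thru :: "real^2 \<Rightarrow> real^2 \<Rightarrow> (real^2) set" where
  "line_thru p u = {x. \<exists>t. x = p + t *\<^sub>R u}"

definition line_meet :: "real^2 \<Rightarrow> real^2 \<Rightarrow> real^2 \<Rightarrow> real^2 \<Rightarrow> real^2" where
  "line_meet p u q v = (THE x. x \<in> line_thru p u \<and> x \<in> line_thru q v)"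

definition C3_on :: "real set \<Rightarrow> (real \<Rightarrow> real^2) \<Rightarrow> bool" where
  "C3_on I X \<longleftrightarrow> (\<exists>X1 X2 X3. (\<forall>s\<in>I. (X has_vector_derivative X1 s) (at s)
      \<and> (X1 has_vector_derivative X2 s) (at s) \<and> (X2 has_vector_derivative X3 s) (at s))
      \<and> continuous_on I X3)"

definition D1 :: "(real \<Rightarrow> real^2) \<Rightarrow> real \<Rightarrow> real^2" where
  "D1 X s = vector_derivative X (at s)"

definition D2 :: "(real \<Rightarrow> real^2) \<Rightarrow> real \<Rightarrow> real^2" where
  "D2 X s = vector_derivative (D1 X) (at s)"

definition convex_curve :: "real set \<Rightarrow> (real \<Rightarrow> real^2) \<Rightarrow> bool" where
  "convex_curve I X \<longleftrightarrow> (\<forall>s\<in>I.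
      (\<forall>t\<in>I. (X t - X s) \<bullet> rot90 (D1 X s) \<ge> 0) \<or> (\<forall>t\<in>I. (X t - X s) \<bullet> rot90 (D1 X s) \<le> 0))"

definition normal :: "real set \<Rightarrow> (real \<Rightarrow> real^2) \<Rightarrow> real \<Rightarrow> real^2" where
  "normal I X s = (if (\<forall>t\<in>I. (X t - X s) \<bullet> rot90 (D1 X s) \<ge> 0)
                   then rot90 (D1 X s) else - rot90 (D1 X s))"

definition curvature :: "real set \<Rightarrow> (real \<Rightarrow> real^2) \<Rightarrow> real \<Rightarrow> real" where
  "curvature I X s = D2 X s \<bullet> normal I X s"

definition strictly_convex_curve :: "real set \<Rightarrow> (real \<Rightarrow> real^2) \<Rightarrow> bool" where
  "strictly_convex_curve I X \<longleftrightarrow> open I \<and> is_interval I \<and> I \<noteq> {}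
     \<and> C3_on I X \<and> (\<forall>s\<in>I. norm (D1 X s) = 1)
     \<and> inj_on X I \<and> convex_curve I X \<and> (\<forall>s\<in>I. curvature I X s > 0)"

text \<open>Parameter of a point of the trace (well defined since X is simple).\<close>
definition param :: "real set \<Rightarrow> (real \<Rightarrow> real^2) \<Rightarrow> real^2 \<Rightarrow> real" where
  "param I X q = (THE s. s \<in> I \<and> X s = q)"

definition meet_set :: "real set \<Rightarrow> (real \<Rightarrow> real^2) \<Rightarrow> real \<Rightarrow> real \<Rightarrow> (real^2) set" where
  "meet_set I X s0 h = X ` I \<inter> line_thru (X s0 + h *\<^sub>R normal I X s0) (D1 X s0)"

definition A12 :: "real set \<Rightarrow> (real \<Rightarrow> real^2) \<Rightarrow> real \<Rightarrow> real \<Rightarrow> (real^2) \<times> (real^2)" where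
  "A12 I X s0 h = (SOME (a1, a2). a1 \<noteq> a2 \<and> meet_set I X s0 h = {a1, a2})"

definition T_area :: "real set \<Rightarrow> (real \<Rightarrow> real^2) \<Rightarrow> real \<Rightarrow> real \<Rightarrow> real" where
  "T_area I X s0 h = (case A12 I X s0 h of (a1, a2) \<Rightarrow> tri_area (X s0) a1 a2)"

definition U_area :: "real set \<Rightarrow> (real \<Rightarrow> real^2) \<Rightarrow> real \<Rightarrow> real \<Rightarrow> real" where
  "U_area I X s0 h = (case A12 I X s0 h of (a1, a2) \<Rightarrow>
     (let d1 = D1 X (param I X a1); d2 = D1 X (param I X a2); d = D1 X s0;
          B = line_meet a1 d1 a2 d2;
          B1 = line_meet (X s0) d a1 d1;
          B2 = line_meet (X s0) d a2 d2
      in tri_area B B1 B2))"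

end

theory Submission
  imports Defs
begin

text \<open>
  In the frame at P formed by the unit tangent and the inner normal, the curve near P is the
  graph of a convex function v of the tangential coordinate u with v = \<kappa> u^2 / 2 + o(u^2).
  Convexity forbids a third intersection with the line v = h, so for small h the line meets
  the curve exactly twice, at arclength s0 \<mp> c \<surd>h + o(\<surd>h) with c = \<surd>(2 / \<kappa>), where the
  tangents have normal components \<mp> \<kappa> c \<surd>h + o(\<surd>h). Both areas are explicit rational
  expressions in these coordinates, homogeneous of degree 3 under (u, v) \<mapsto> (r u, r^2 v);
  rescaling by r = \<surd>h and letting h \<rightarrow> 0 gives the limits c and c / 2.
\<close>

section \<open>Triangles in an orthonormal frame of the plane\<close>

lemma inner_vec2: "(x::real^2) \<bullet> y = x$1 * y$1 + x$2 * y$2"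
  by (simp add: inner_vec_def sum_2)

lemma rot90_nth [simp]: "rot90 x $ 1 = - x$2" "rot90 x $ 2 = x$1"
  by (simp_all add: rot90_def)

lemma rot90_scaleR: "rot90 (a *\<^sub>R x) = a *\<^sub>R rot90 x"
  by (simp add: vec_eq_iff forall_2)

lemma rot90_minus: "rot90 (- x) = - rot90 x"
  by (simp add: vec_eq_iff forall_2)

lemma rot90_rot90 [simp]: "rot90 (rot90 x) = - x"
  by (simp add: vec_eq_iff forall_2)

lemma norm_rot90: "norm (rot90 x) = norm x"
  by (simp add: norm_eq_sqrt_inner inner_vec2 add.commute)

lemma inner_rot90_left: "rot90 x \<bullet> y = - (x \<bullet> rot90 y)"
  by (simp add: inner_vec2)

lemma line_meet_eq:
  assumes "cross2 u w \<noteq> 0"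
  shows "line_meet p u q w = p + (cross2 (q - p) w / cross2 u w) *\<^sub>R u"
  unfolding line_meet_def
proof (rule the_equality)
  let ?t = "cross2 (q - p) w / cross2 u w" and ?s = "cross2 (q - p) u / cross2 u w"
  have "p + ?t *\<^sub>R u = q + ?s *\<^sub>R w"
    using assms by (simp add: vec_eq_iff forall_2 cross2_def field_simps)
  then show "p + ?t *\<^sub>R u \<in> line_thru p u \<and> p + ?t *\<^sub>R u \<in> line_thru q w"
    unfolding line_thru_def by (metis (mono_tags, lifting) mem_Collect_eq)
next
  fix x assume "x \<in> line_thru p u \<and> x \<in> line_thru q w"
  then obtain t s where x: "x = p + t *\<^sub>R u" "x = q + s *\<^sub>R w"
    unfolding line_thru_def by blast
  then have "p$1 + t * u$1 = q$1 + s * w$1" "p$2 + t * u$2 = q$2 + s * w$2"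
    by (auto simp: vec_eq_iff forall_2)
  then have "t * cross2 u w = cross2 (q - p) w"
    by (simp add: cross2_def algebra_simps) algebra
  then show "x = p + (cross2 (q - p) w / cross2 u w) *\<^sub>R u"
    using assms x by (simp add: field_simps)
qed

text \<open>
  The area of the triangle bounded by the line v = 0 and the lines through (ua, h) and (ub, h)
  with directions (pa, qa) and (pb, qb); the latter two lines meet at the point with parameter
  (ub - ua) qb / (pa qb - qa pb) on the first one.
\<close>
definition tangent_triangle_area ::
    "real \<Rightarrow> real \<Rightarrow> real \<Rightarrow> real \<Rightarrow> real \<Rightarrow> real \<Rightarrow> real \<Rightarrow> real" where
  "tangent_triangle_area h ua ub pa pb qa qb =
     \<bar>h + (ub - ua) * qb / (pa * qb - qa * pb) * qa\<bar>
       * \<bar>(ub - h * pb / qb) - (ua - h * pa / qa)\<bar> / 2"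

lemma tangent_triangle_area_swap:
  "tangent_triangle_area h ub ua pb pa qb qa = tangent_triangle_area h ua ub pa pb qa qb"
proof -
  have "(ua - ub) * qa / (pb * qa - qb * pa) * qb = (ub - ua) * qb / (pa * qb - qa * pb) * qa"
    by (cases "pa * qb - qa * pb = 0") (simp_all add: field_simps)
  then show ?thesis
    unfolding tangent_triangle_area_def by (simp add: abs_minus_commute)
qed

lemma tangent_triangle_area_scale:
  assumes "r > 0"
  shows "tangent_triangle_area (r\<^sup>2) (r * ua) (r * ub) pa pb (r * qa) (r * qb)
    = r ^ 3 * tangent_triangle_area 1 ua ub pa pb qa qb"
proof -
  have "r\<^sup>2 + (r * ub - r * ua) * (r * qb) / (pa * (r * qb) - r * qa * pb) * (r * qa)
      = r\<^sup>2 * (1 + (ub - ua) * qb / (pa * qb - qa * pb) * qa)"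
    using assms by (cases "pa * qb - qa * pb = 0") (simp_all add: field_simps power2_eq_square)
  moreover have "(r * ub - r\<^sup>2 * pb / (r * qb)) - (r * ua - r\<^sup>2 * pa / (r * qa))
      = r * ((ub - pb / qb) - (ua - pa / qa))"
    using assms by (simp add: field_simps power2_eq_square)
  ultimately show ?thesis
    using assms by (simp add: tangent_triangle_area_def abs_mult power3_eq_cube power2_eq_square)
qed

lemma tendsto_tangent_triangle_area:
  assumes "(ua \<longlongrightarrow> ua0) F" "(ub \<longlongrightarrow> ub0) F" "(pa \<longlongrightarrow> pa0) F" "(pb \<longlongrightarrow> pb0) F"
    "(qa \<longlongrightarrow> qa0) F" "(qb \<longlongrightarrow> qb0) F"
    and "qa0 \<noteq> 0" "qb0 \<noteq> 0" "pa0 * qb0 - qa0 * pb0 \<noteq> 0"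
  shows "((\<lambda>x. tangent_triangle_area h (ua x) (ub x) (pa x) (pb x) (qa x) (qb x))
    \<longlongrightarrow> tangent_triangle_area h ua0 ub0 pa0 pb0 qa0 qb0) F"
  unfolding tangent_triangle_area_def by (intro tendsto_intros assms) simp

locale plane_frame =
  fixes T N :: "real^2"
  assumes norm_T: "norm T = 1" and N_rot90: "N = rot90 T \<or> N = - rot90 T"
begin

definition det :: "real^2 \<Rightarrow> real^2 \<Rightarrow> real" where
  "det x y = (x \<bullet> T) * (y \<bullet> N) - (x \<bullet> N) * (y \<bullet> T)"

definition orient :: real where "orient = rot90 T \<bullet> N"

lemma T_coords: "T$1 * T$1 + T$2 * T$2 = 1"
  using norm_T by (simp add: norm_eq_sqrt_inner inner_vec2)

lemma inner_T_T [simp]: "T \<bullet> T = 1" and inner_T_N [simp]: "T \<bullet> N = 0"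
  and inner_N_T [simp]: "N \<bullet> T = 0" and inner_N_N [simp]: "N \<bullet> N = 1"
  using N_rot90 T_coords by (auto simp: inner_vec2 algebra_simps)

lemma orient_cases: "orient = 1 \<or> orient = -1"
  using N_rot90 norm_T by (auto simp: orient_def dot_square_norm norm_rot90)

lemma frame_decomp: "x = (x \<bullet> T) *\<^sub>R T + (x \<bullet> N) *\<^sub>R N"
  using N_rot90 T_coords
  by (auto simp: vec_eq_iff forall_2 inner_vec2 algebra_simps) algebra+

lemma inner_N: "y \<bullet> N = orient * (y \<bullet> rot90 T)"
  using N_rot90 inner_T_T by (auto simp: orient_def inner_rot90_left rot90_minus)

lemma inner_rot90_T: "y \<bullet> rot90 T = orient * (y \<bullet> N)"
  using orient_cases by (auto simp: inner_N)

lemma cross2_eq: "cross2 x y = orient * det x y"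
proof -
  have "det x y = orient * ((x \<bullet> T) * (y \<bullet> rot90 T) - (x \<bullet> rot90 T) * (y \<bullet> T))"
    unfolding det_def inner_N[of x] inner_N[of y] by algebra
  also have "(x \<bullet> T) * (y \<bullet> rot90 T) - (x \<bullet> rot90 T) * (y \<bullet> T) = cross2 x y"
    using T_coords by (simp add: inner_vec2 cross2_def) algebra
  finally have "det x y = orient * cross2 x y" .
  then show ?thesis
    using orient_cases by auto
qed

lemma tri_area_eq: "tri_area a b c = \<bar>det (b - a) (c - a)\<bar> / 2"
  using orient_cases by (auto simp: tri_area_def cross2_eq)

lemma line_meet_frame:
  assumes "det u w \<noteq> 0"
  shows "line_meet p u q w = p + (det (q - p) w / det u w) *\<^sub>R u"
  using assms orient_cases by (auto simp: line_meet_eq cross2_eq)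

lemma line_thru_parallel: "line_thru (z + h *\<^sub>R N) T = {x. (x - z) \<bullet> N = h}"
proof (intro set_eqI iffI)
  fix x assume "x \<in> line_thru (z + h *\<^sub>R N) T"
  then show "x \<in> {x. (x - z) \<bullet> N = h}"
    by (auto simp: line_thru_def inner_add_left)
next
  fix x assume "x \<in> {x. (x - z) \<bullet> N = h}"
  then have "x = z + h *\<^sub>R N + ((x - z) \<bullet> T) *\<^sub>R T"
    using frame_decomp[of "x - z"] by (simp add: algebra_simps)
  then show "x \<in> line_thru (z + h *\<^sub>R N) T"
    unfolding line_thru_def by blast
qed

lemma tri_area_chord:
  assumes "(a - z) \<bullet> N = h" "(b - z) \<bullet> N = h"
  shows "tri_area z a b = \<bar>h\<bar> * \<bar>(b - z) \<bullet> T - (a - z) \<bullet> T\<bar> / 2"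
proof -
  have "det (a - z) (b - z) = - h * ((b - z) \<bullet> T - (a - z) \<bullet> T)"
    using assms by (simp add: det_def algebra_simps)
  then show ?thesis
    by (simp add: tri_area_eq abs_mult)
qed

lemma tri_area_tangents:
  assumes "(a - z) \<bullet> N = h" "(b - z) \<bullet> N = h"
    and "da \<bullet> N \<noteq> 0" "db \<bullet> N \<noteq> 0" "det da db \<noteq> 0"
  shows "tri_area (line_meet a da b db) (line_meet z T a da) (line_meet z T b db)
    = tangent_triangle_area h ((a - z) \<bullet> T) ((b - z) \<bullet> T) (da \<bullet> T) (db \<bullet> T) (da \<bullet> N) (db \<bullet> N)"
proof -
  define ua where "ua = (a - z) \<bullet> T"
  define ub where "ub = (b - z) \<bullet> T"
  define pa where "pa = da \<bullet> T"
  define pb where "pb = db \<bullet> T"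
  define qa where "qa = da \<bullet> N"
  define qb where "qb = db \<bullet> N"
  define \<tau> where "\<tau> = (ub - ua) * qb / det da db"
  define ta where "ta = ua - h * pa / qa"
  define tb where "tb = ub - h * pb / qb"
  have a: "a = z + ua *\<^sub>R T + h *\<^sub>R N" and b: "b = z + ub *\<^sub>R T + h *\<^sub>R N"
    using frame_decomp[of "a - z"] frame_decomp[of "b - z"] assms(1,2)
    by (simp_all add: ua_def ub_def algebra_simps)
  have "line_meet a da b db = a + \<tau> *\<^sub>R da"
    using assms(5) by (simp add: line_meet_frame \<tau>_def det_def b a inner_add_left
        algebra_simps pb_def qb_def)
  moreover have "line_meet z T a da = z + ta *\<^sub>R T" "line_meet z T b db = z + tb *\<^sub>R T"
    using assms(3,4) by (simp_all add: line_meet_frame det_def ta_def tb_def a b inner_add_left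
        pa_def qa_def pb_def qb_def field_simps)
  moreover have "det (z + ta *\<^sub>R T - (a + \<tau> *\<^sub>R da)) (z + tb *\<^sub>R T - (a + \<tau> *\<^sub>R da))
      = (h + \<tau> * qa) * (tb - ta)"
    by (simp add: det_def a inner_add_left inner_diff_left pa_def qa_def algebra_simps)
  ultimately show ?thesis
    by (simp add: tri_area_eq tangent_triangle_area_def abs_mult \<tau>_def det_def
        pa_def pb_def qa_def qb_def ta_def tb_def ua_def ub_def)
qed

end

section \<open>The curve in the tangent frame at P\<close>

lemma has_real_derivative_inner_const:
  assumes "(f has_vector_derivative f') F"
  shows "((\<lambda>s. f s \<bullet> c) has_real_derivative f' \<bullet> c) F"
  using bounded_linear.has_vector_derivative[OF bounded_linear_inner_left assms]
  by (simp add: has_real_derivative_iff_has_vector_derivative)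

lemma tendsto_ratio_along:
  fixes f S :: "real \<Rightarrow> real"
  assumes "((\<lambda>\<sigma>. f (s0 + \<sigma>) / \<sigma>) \<longlongrightarrow> L) (at 0)"
    and S: "filterlim (\<lambda>h. S h - s0) (at 0) F"
    and "((\<lambda>h. (S h - s0) / g h) \<longlongrightarrow> M) F"
  shows "((\<lambda>h. f (S h) / g h) \<longlongrightarrow> L * M) F"
proof -
  have "((\<lambda>h. f (s0 + (S h - s0)) / (S h - s0)) \<longlongrightarrow> L) F"
    by (rule filterlim_compose[OF assms(1) S])
  then have "((\<lambda>h. f (S h) / (S h - s0) * ((S h - s0) / g h)) \<longlongrightarrow> L * M) F"
    using assms(3) by (intro tendsto_mult) auto
  moreover have "eventually (\<lambda>h. S h - s0 \<noteq> 0) F"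
    using S by (simp add: filterlim_at)
  then have "eventually (\<lambda>h. f (S h) / (S h - s0) * ((S h - s0) / g h) = f (S h) / g h) F"
    by eventually_elim simp
  ultimately show ?thesis
    by (rule Lim_transform_eventually)
qed

locale convex_arc_at =
  fixes I :: "real set" and X X1 X2 :: "real \<Rightarrow> real^2" and s0 :: real
  assumes open_I: "open I" and s0_in_I: "s0 \<in> I"
    and X_deriv: "\<And>s. s \<in> I \<Longrightarrow> (X has_vector_derivative X1 s) (at s)"
    and X1_deriv: "\<And>s. s \<in> I \<Longrightarrow> (X1 has_vector_derivative X2 s) (at s)"
    and X2_cont: "\<And>s. s \<in> I \<Longrightarrow> isCont X2 s"
    and unit_speed: "\<And>s. s \<in> I \<Longrightarrow> norm (X1 s) = 1"
    and inj: "inj_on X I"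
    and convex: "convex_curve I X"
    and curvature_pos: "curvature I X s0 > 0"
begin

definition "T0 = X1 s0"
definition "N0 = normal I X s0"
definition "\<kappa> = curvature I X s0"

definition "u s = (X s - X s0) \<bullet> T0"
definition "v s = (X s - X s0) \<bullet> N0"
definition "p s = X1 s \<bullet> T0"
definition "q s = X1 s \<bullet> N0"

lemma D1_eq: "s \<in> I \<Longrightarrow> D1 X s = X1 s"
  unfolding D1_def using X_deriv by (simp add: vector_derivative_at)

lemma D2_eq: "s \<in> I \<Longrightarrow> D2 X s = X2 s"
proof -
  assume s: "s \<in> I"
  have "(D1 X has_vector_derivative X2 s) (at s)"
    by (rule has_vector_derivative_transform_within_open[OF X1_deriv[OF s] open_I s])
      (simp add: D1_eq)
  then show ?thesis
    unfolding D2_def by (simp add: vector_derivative_at)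
qed

sublocale frame: plane_frame T0 N0
  by unfold_locales (simp_all add: T0_def N0_def normal_def D1_eq s0_in_I unit_speed)

lemma convex_at:
  "s \<in> I \<Longrightarrow> (\<forall>t\<in>I. (X t - X s) \<bullet> rot90 (X1 s) \<ge> 0) \<or> (\<forall>t\<in>I. (X t - X s) \<bullet> rot90 (X1 s) \<le> 0)"
  using convex by (simp add: convex_curve_def D1_eq)

lemma X_diff_frame: "X t - X s = (u t - u s) *\<^sub>R T0 + (v t - v s) *\<^sub>R N0"
  using frame.frame_decomp[of "X t - X s"] by (simp add: u_def v_def inner_diff_left)

lemma u_deriv: "s \<in> I \<Longrightarrow> (u has_real_derivative p s) (at s)"
  unfolding u_def p_def inner_diff_left
  by (auto intro!: derivative_eq_intros has_real_derivative_inner_const X_deriv)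

lemma v_deriv: "s \<in> I \<Longrightarrow> (v has_real_derivative q s) (at s)"
  unfolding v_def q_def inner_diff_left
  by (auto intro!: derivative_eq_intros has_real_derivative_inner_const X_deriv)

lemma q_deriv: "s \<in> I \<Longrightarrow> (q has_real_derivative X2 s \<bullet> N0) (at s)"
  unfolding q_def by (rule has_real_derivative_inner_const[OF X1_deriv])

lemma isCont_p: "s \<in> I \<Longrightarrow> isCont p s"
  unfolding p_def by (intro continuous_intros has_vector_derivative_continuous[OF X1_deriv])

lemma u_s0 [simp]: "u s0 = 0" and v_s0 [simp]: "v s0 = 0"
  and p_s0 [simp]: "p s0 = 1" and q_s0 [simp]: "q s0 = 0"
  by (simp_all add: u_def v_def p_def q_def flip: T0_def)

lemma kappa_eq: "\<kappa> = X2 s0 \<bullet> N0"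
  by (simp add: \<kappa>_def curvature_def D2_eq s0_in_I N0_def)

lemma kappa_pos: "\<kappa> > 0"
  using curvature_pos by (simp add: \<kappa>_def)

text \<open>The line at height h meets the curve at parameters s0 \<mp> c \<surd>h + o(\<surd>h).\<close>
definition "c = sqrt (2 / \<kappa>)"

lemma c_pos: "c > 0" and kappa_c_sq: "\<kappa> * c\<^sup>2 = 2"
  using kappa_pos by (simp_all add: c_def)

lemma exists_window: "\<exists>\<delta>>0. \<forall>s. \<bar>s - s0\<bar> \<le> \<delta> \<longrightarrow> s \<in> I \<and> p s > 0 \<and> X2 s \<bullet> N0 > 0"
proof -
  have p_nhds: "(p \<longlongrightarrow> p s0) (nhds s0)"
    using isCont_p[OF s0_in_I] unfolding isCont_def tendsto_at_iff_tendsto_nhds .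
  have X2_nhds: "((\<lambda>s. X2 s \<bullet> N0) \<longlongrightarrow> X2 s0 \<bullet> N0) (nhds s0)"
    using X2_cont[OF s0_in_I] unfolding isCont_def tendsto_at_iff_tendsto_nhds
    by (intro tendsto_intros)
  have "eventually (\<lambda>s. s \<in> I) (nhds s0)"
    using open_I s0_in_I by (rule eventually_nhds_in_open)
  moreover have "eventually (\<lambda>s. p s > 0) (nhds s0)"
    using p_nhds by (rule order_tendstoD) simp
  moreover have "eventually (\<lambda>s. X2 s \<bullet> N0 > 0) (nhds s0)"
    using X2_nhds by (rule order_tendstoD) (use kappa_pos kappa_eq in simp)
  ultimately have "eventually (\<lambda>s. s \<in> I \<and> p s > 0 \<and> X2 s \<bullet> N0 > 0) (nhds s0)"
    by eventually_elim blast
  then show ?thesis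
    unfolding eventually_nhds_metric_le by (simp add: dist_real_def)
qed

lemma u_quotient_lim: "((\<lambda>\<sigma>. u (s0 + \<sigma>) / \<sigma>) \<longlongrightarrow> 1) (at 0)"
  using DERIV_D[OF u_deriv[OF s0_in_I]] by simp

lemma q_quotient_lim: "((\<lambda>\<sigma>. q (s0 + \<sigma>) / \<sigma>) \<longlongrightarrow> \<kappa>) (at 0)"
  using DERIV_D[OF q_deriv[OF s0_in_I]] by (simp add: kappa_eq)

lemma p_lim: "((\<lambda>\<sigma>. p (s0 + \<sigma>)) \<longlongrightarrow> 1) (at 0)"
  using isCont_p[OF s0_in_I] by (simp add: isCont_iff)

lemma v_quadratic_lim: "((\<lambda>\<sigma>. v (s0 + \<sigma>) / \<sigma>\<^sup>2) \<longlongrightarrow> \<kappa> / 2) (at 0)"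
proof (rule lhopital)
  show "((\<lambda>\<sigma>. v (s0 + \<sigma>)) \<longlongrightarrow> 0) (at 0)"
    using DERIV_isCont[OF v_deriv[OF s0_in_I]] by (simp add: isCont_iff)
  have "eventually (\<lambda>\<sigma>. s0 + \<sigma> \<in> I) (at 0)"
    using eventually_at_in_open'[OF open_I s0_in_I]
    unfolding eventually_at_to_0[of _ s0] by (simp add: add.commute)
  then show "eventually (\<lambda>\<sigma>. ((\<lambda>\<sigma>. v (s0 + \<sigma>)) has_real_derivative q (s0 + \<sigma>)) (at \<sigma>)) (at 0)"
  proof eventually_elim
    case (elim \<sigma>)
    have "((\<lambda>\<sigma>. v (s0 + \<sigma>)) has_real_derivative q (s0 + \<sigma>) * 1) (at \<sigma>)"
      by (rule DERIV_chain2[where g = "\<lambda>\<sigma>. s0 + \<sigma>", OF v_deriv[OF elim]])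
        (auto intro!: derivative_eq_intros)
    then show ?case by simp
  qed
  show "eventually (\<lambda>\<sigma>. ((\<lambda>\<sigma>. \<sigma>\<^sup>2) has_real_derivative 2 * \<sigma>) (at \<sigma>)) (at (0::real))"
    by (auto intro!: always_eventually derivative_eq_intros)
  show "((\<lambda>\<sigma>. q (s0 + \<sigma>) / (2 * \<sigma>)) \<longlongrightarrow> \<kappa> / 2) (at 0)"
    using tendsto_divide[OF q_quotient_lim tendsto_const[of 2]] by (simp add: mult.commute)
  show "((\<lambda>\<sigma>::real. \<sigma>\<^sup>2) \<longlongrightarrow> 0) (at 0)"
    by (auto intro!: tendsto_eq_intros)
  show "eventually (\<lambda>\<sigma>::real. \<sigma>\<^sup>2 \<noteq> 0) (at 0)" "eventually (\<lambda>\<sigma>::real. 2 * \<sigma> \<noteq> 0) (at 0)"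
    by (simp_all add: eventually_at_filter)
qed

end

locale convex_arc_window = convex_arc_at +
  fixes \<delta> :: real
  assumes \<delta>_pos: "\<delta> > 0"
    and window: "\<And>s. \<bar>s - s0\<bar> \<le> \<delta> \<Longrightarrow> s \<in> I \<and> p s > 0 \<and> X2 s \<bullet> N0 > 0"
begin

lemma q_strict_mono:
  assumes "s0 - \<delta> \<le> a" "a < b" "b \<le> s0 + \<delta>"
  shows "q a < q b"
  using assms(2)
proof (rule DERIV_pos_imp_increasing)
  fix x assume "a \<le> x" "x \<le> b"
  then have "\<bar>x - s0\<bar> \<le> \<delta>" using assms by auto
  then show "\<exists>y. (q has_real_derivative y) (at x) \<and> y > 0"
    using window q_deriv by blast
qed

lemma q_neg: "s0 - \<delta> \<le> t \<Longrightarrow> t < s0 \<Longrightarrow> q t < 0"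
  using q_strict_mono[of t s0] \<delta>_pos by simp

lemma q_pos: "s0 < t \<Longrightarrow> t \<le> s0 + \<delta> \<Longrightarrow> q t > 0"
  using q_strict_mono[of s0 t] \<delta>_pos by simp

lemma continuous_on_v: "s0 - \<delta> \<le> a \<Longrightarrow> b \<le> s0 + \<delta> \<Longrightarrow> continuous_on {a..b} v"
  using window by (intro continuous_at_imp_continuous_on ballI DERIV_isCont[OF v_deriv]) auto

lemma v_strict_mono_right:
  assumes "s0 \<le> a" "a < b" "b \<le> s0 + \<delta>"
  shows "v a < v b"
  using assms(2) _ continuous_on_v
proof (rule DERIV_pos_imp_increasing_open)
  fix x assume "a < x" "x < b"
  then have "s0 < x" "x \<le> s0 + \<delta>" "\<bar>x - s0\<bar> \<le> \<delta>" using assms by auto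
  then show "\<exists>y. (v has_real_derivative y) (at x) \<and> y > 0"
    using window q_pos v_deriv by blast
qed (use assms \<delta>_pos in auto)

lemma v_strict_anti_left:
  assumes "s0 - \<delta> \<le> a" "a < b" "b \<le> s0"
  shows "v a > v b"
  using assms(2) _ continuous_on_v
proof (rule DERIV_neg_imp_decreasing_open)
  fix x assume "a < x" "x < b"
  then have "s0 - \<delta> \<le> x" "x < s0" "\<bar>x - s0\<bar> \<le> \<delta>" using assms by auto
  then show "\<exists>y. (v has_real_derivative y) (at x) \<and> y < 0"
    using window q_neg v_deriv by blast
qed (use assms \<delta>_pos in auto)

lemma u_strict_mono:
  assumes "s0 - \<delta> \<le> a" "a < b" "b \<le> s0 + \<delta>"
  shows "u a < u b"
  using assms(2)
proof (rule DERIV_pos_imp_increasing)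
  fix x assume "a \<le> x" "x \<le> b"
  then have "\<bar>x - s0\<bar> \<le> \<delta>" using assms by auto
  then show "\<exists>y. (u has_real_derivative y) (at x) \<and> y > 0"
    using window u_deriv by blast
qed

section \<open>The chord at height h\<close>

definition "h0 = min (v (s0 - \<delta>)) (v (s0 + \<delta>))"

lemma h0_pos: "h0 > 0"
  using v_strict_mono_right[of s0 "s0 + \<delta>"] v_strict_anti_left[of "s0 - \<delta>" s0] \<delta>_pos
  by (simp add: h0_def)

definition "left_root h = (SOME s. s0 - \<delta> < s \<and> s < s0 \<and> v s = h)"
definition "right_root h = (SOME s. s0 < s \<and> s < s0 + \<delta> \<and> v s = h)"

lemma left_root_spec:
  assumes "0 < h" "h < h0"
  shows "s0 - \<delta> < left_root h \<and> left_root h < s0 \<and> v (left_root h) = h"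
proof -
  have "\<forall>x. s0 - \<delta> \<le> x \<and> x \<le> s0 \<longrightarrow> isCont v x"
    using window by (auto intro!: DERIV_isCont[OF v_deriv])
  then obtain s where s: "s0 - \<delta> \<le> s" "s \<le> s0" "v s = h"
    using IVT2[of v s0 h "s0 - \<delta>"] assms \<delta>_pos by (force simp: h0_def)
  then have "s \<noteq> s0" "s \<noteq> s0 - \<delta>"
    using assms by (auto simp: h0_def)
  with s have "\<exists>s. s0 - \<delta> < s \<and> s < s0 \<and> v s = h"
    by (intro exI[of _ s]) auto
  then show ?thesis
    unfolding left_root_def by (rule someI_ex)
qed

lemma right_root_spec:
  assumes "0 < h" "h < h0"
  shows "s0 < right_root h \<and> right_root h < s0 + \<delta> \<and> v (right_root h) = h"
proof -
  have "\<forall>x. s0 \<le> x \<and> x \<le> s0 + \<delta> \<longrightarrow> isCont v x"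
    using window by (auto intro!: DERIV_isCont[OF v_deriv])
  then obtain s where s: "s0 \<le> s" "s \<le> s0 + \<delta>" "v s = h"
    using IVT[of v s0 h "s0 + \<delta>"] assms \<delta>_pos by (force simp: h0_def)
  then have "s \<noteq> s0" "s \<noteq> s0 + \<delta>"
    using assms by (auto simp: h0_def)
  with s have "\<exists>s. s0 < s \<and> s < s0 + \<delta> \<and> v s = h"
    by (intro exI[of _ s]) auto
  then show ?thesis
    unfolding right_root_def by (rule someI_ex)
qed

text \<open>Otherwise the tangent at m would separate X a from X b.\<close>

lemma horizontal_tangent_between:
  assumes "a \<in> I" "m \<in> I" "b \<in> I" "v a = v m" "v b = v m" "u a < u m" "u m < u b"
  shows "q m = 0"
proof (rule ccontr)
  assume "q m \<noteq> 0"
  define c0 where "c0 = T0 \<bullet> rot90 (X1 m)"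
  have "q m = - frame.orient * c0"
    by (simp add: q_def c0_def frame.inner_N inner_rot90_left inner_commute)
  then have "c0 \<noteq> 0" using \<open>q m \<noteq> 0\<close> by auto
  have side: "(X t - X m) \<bullet> rot90 (X1 m) = (u t - u m) * c0" if "v t = v m" for t
    using that by (simp add: X_diff_frame c0_def)
  have "(u a - u m) * c0 > 0 \<and> (u b - u m) * c0 < 0 \<or> (u a - u m) * c0 < 0 \<and> (u b - u m) * c0 > 0"
    using assms(6,7) \<open>c0 \<noteq> 0\<close> by (cases "c0 > 0") (auto simp: mult_neg_pos mult_pos_neg mult_neg_neg)
  then show False
    using convex_at[OF assms(2)] side[OF assms(4)] side[OF assms(5)] assms(1,3) by force
qed

text \<open>
  Otherwise the tangent at m would be the line v = v m, which separates P from X (s0 + \<delta>).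
\<close>

lemma no_horizontal_tangent:
  assumes "m \<in> I" "0 < v m" "v m < h0"
  shows "q m \<noteq> 0"
proof
  assume "q m = 0"
  then have X1m: "X1 m = p m *\<^sub>R T0"
    using frame.frame_decomp[of "X1 m"] by (simp add: p_def q_def)
  define k where "k = p m * frame.orient"
  have "p m \<noteq> 0" using unit_speed[OF assms(1)] X1m by auto
  then have "k \<noteq> 0" using frame.orient_cases by (auto simp: k_def)
  have side: "(X t - X m) \<bullet> rot90 (X1 m) = k * (v t - v m)" for t
    by (simp add: X1m rot90_scaleR k_def frame.inner_rot90_T v_def inner_diff_left)
  have "v (s0 + \<delta>) - v m > 0" using assms h0_def by simp
  then have "k * (0 - v m) > 0 \<and> k * (v (s0 + \<delta>) - v m) < 0 \<or> k * (0 - v m) < 0 \<and> k * (v (s0 + \<delta>) - v m) > 0"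
    using \<open>k \<noteq> 0\<close> assms(2) by (cases "k > 0") (auto simp: mult_neg_pos mult_pos_neg mult_neg_neg)
  then show False
    using convex_at[OF assms(1)] side[of s0] side[of "s0 + \<delta>"] s0_in_I window[of "s0 + \<delta>"] \<delta>_pos
    by force
qed

lemma level_imp_root:
  assumes "0 < h" "h < h0" "s \<in> I" "v s = h"
  shows "s = left_root h \<or> s = right_root h"
proof (rule ccontr)
  assume ne: "\<not> (s = left_root h \<or> s = right_root h)"
  define a b where "a = left_root h" and "b = right_root h"
  have a: "s0 - \<delta> < a" "a < s0" "v a = h" and b: "s0 < b" "b < s0 + \<delta>" "v b = h"
    using left_root_spec[OF assms(1,2)] right_root_spec[OF assms(1,2)] by (auto simp: a_def b_def)
  have "a \<in> I" "b \<in> I" "q a < 0" "q b > 0" "u a < u b"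
    using a b window q_neg q_pos u_strict_mono by auto
  have "u s \<noteq> u t" if "t \<in> {a, b}" for t
  proof
    assume "u s = u t"
    then have "X s = X t"
      using that X_diff_frame[of s t] a b assms(4) by auto
    then show False
      using inj assms(3) that \<open>a \<in> I\<close> \<open>b \<in> I\<close> ne by (auto simp: inj_on_def a_def b_def)
  qed
  then have "u s \<noteq> u a" "u s \<noteq> u b" by auto
  then consider "u s < u a" | "u a < u s" "u s < u b" | "u b < u s"
    using \<open>u a < u b\<close> by linarith
  then show False
  proof cases
    case 1
    then show False
      using horizontal_tangent_between[of s a b] assms \<open>a \<in> I\<close> \<open>b \<in> I\<close> \<open>q a < 0\<close>
        \<open>u a < u b\<close> a b by simp
  next
    case 2
    then show False
      using horizontal_tangent_between[of a s b] no_horizontal_tangent[of s] assms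
        \<open>a \<in> I\<close> \<open>b \<in> I\<close> a b by simp
  next
    case 3
    then show False
      using horizontal_tangent_between[of a b s] assms \<open>a \<in> I\<close> \<open>b \<in> I\<close> \<open>q b > 0\<close>
        \<open>u a < u b\<close> a b by simp
  qed
qed

lemma meet_set_eq:
  assumes "0 < h" "h < h0"
  shows "meet_set I X s0 h = {X (left_root h), X (right_root h)}"
proof -
  have "meet_set I X s0 h = X ` {s \<in> I. v s = h}"
    by (auto simp: meet_set_def frame.line_thru_parallel v_def D1_eq s0_in_I
        simp flip: T0_def N0_def)
  also have "{s \<in> I. v s = h} = {left_root h, right_root h}"
    using level_imp_root[OF assms] left_root_spec[OF assms] right_root_spec[OF assms] window by force
  finally show ?thesis by simp
qed

lemma roots_distinct:
  assumes "0 < h" "h < h0"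
  shows "X (left_root h) \<noteq> X (right_root h)"
proof -
  have "left_root h \<noteq> right_root h" "left_root h \<in> I" "right_root h \<in> I"
    using left_root_spec[OF assms] right_root_spec[OF assms] window by auto
  then show ?thesis
    using inj by (auto dest: inj_onD)
qed

lemma A12_eq:
  assumes "0 < h" "h < h0"
  shows "A12 I X s0 h = (X (left_root h), X (right_root h))
    \<or> A12 I X s0 h = (X (right_root h), X (left_root h))"
proof -
  let ?P = "\<lambda>(a1, a2). a1 \<noteq> a2 \<and> meet_set I X s0 h = {a1, a2}"
  have "?P (X (left_root h), X (right_root h))"
    using meet_set_eq[OF assms] roots_distinct[OF assms] by simp
  then have "?P (A12 I X s0 h)"
    unfolding A12_def by (rule someI)
  then show ?thesis
    using meet_set_eq[OF assms] by (auto simp: doubleton_eq_iff split: prod.splits)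
qed

lemma param_eq: "a \<in> I \<Longrightarrow> param I X (X a) = a"
  unfolding param_def by (rule the_equality) (use inj in \<open>auto dest: inj_onD\<close>)

lemma T_area_eq:
  assumes "0 < h" "h < h0"
  shows "T_area I X s0 h = h * \<bar>u (right_root h) - u (left_root h)\<bar> / 2"
proof -
  have "tri_area (X s0) (X a) (X b) = h * \<bar>u b - u a\<bar> / 2" if "v a = h" "v b = h" for a b
    using frame.tri_area_chord[of "X a" "X s0" h "X b"] that assms(1)
    by (simp add: u_def v_def inner_diff_left)
  then show ?thesis
    using A12_eq[OF assms] left_root_spec[OF assms] right_root_spec[OF assms]
    by (auto simp: T_area_def abs_minus_commute)
qed

lemma U_area_eq:
  assumes "0 < h" "h < h0"
  shows "U_area I X s0 h = tangent_triangle_area h (u (left_root h)) (u (right_root h))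
    (p (left_root h)) (p (right_root h)) (q (left_root h)) (q (right_root h))"
proof -
  define a b where "a = left_root h" and "b = right_root h"
  have a: "s0 - \<delta> < a" "a < s0" "v a = h" and b: "s0 < b" "b < s0 + \<delta>" "v b = h"
    using left_root_spec[OF assms] right_root_spec[OF assms] by (auto simp: a_def b_def)
  then have ab: "a \<in> I" "b \<in> I" "q a < 0" "q b > 0" "p a > 0" "p b > 0"
    using window q_neg q_pos by auto
  then have "p a * q b > 0" "q a * p b < 0"
    by (simp_all add: mult_neg_pos)
  then have D: "p a * q b - q a * p b \<noteq> 0" "p b * q a - q b * p a \<noteq> 0"
    by (simp_all add: algebra_simps)
  have tangents: "tri_area (line_meet (X s) (X1 s) (X t) (X1 t))
      (line_meet (X s0) T0 (X s) (X1 s)) (line_meet (X s0) T0 (X t) (X1 t))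
      = tangent_triangle_area h (u s) (u t) (p s) (p t) (q s) (q t)"
    if "v s = h" "v t = h" "q s \<noteq> 0" "q t \<noteq> 0" "p s * q t - q s * p t \<noteq> 0" for s t
    using frame.tri_area_tangents[of "X s" "X s0" h "X t" "X1 s" "X1 t"] that
    by (simp add: u_def v_def p_def q_def frame.det_def)
  from A12_eq[OF assms] show ?thesis
  proof
    assume "A12 I X s0 h = (X (left_root h), X (right_root h))"
    then show ?thesis
      using tangents[of a b] a b ab D
      by (simp add: U_area_def Let_def param_eq D1_eq s0_in_I a_def b_def flip: T0_def)
  next
    assume "A12 I X s0 h = (X (right_root h), X (left_root h))"
    then show ?thesis
      using tangents[of b a] a b ab D
      by (simp add: U_area_def Let_def param_eq D1_eq s0_in_I a_def b_def tangent_triangle_area_swap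
          flip: T0_def)
  qed
qed

section \<open>Asymptotics as h tends to 0\<close>

lemma eventually_small_height: "eventually (\<lambda>h. 0 < h \<and> h < h0) (at_right 0)"
  using eventually_at_right_real[OF h0_pos] by simp

lemma v_lower_bound:
  assumes "0 < e" "e \<le> \<bar>s - s0\<bar>" "\<bar>s - s0\<bar> \<le> \<delta>"
  shows "min (v (s0 - e)) (v (s0 + e)) \<le> v s"
proof (cases "s0 \<le> s")
  case True
  then have "v (s0 + e) \<le> v s"
    using v_strict_mono_right[of "s0 + e" s] assms by (cases "s = s0 + e") auto
  then show ?thesis by simp
next
  case False
  then have "v (s0 - e) \<le> v s"
    using v_strict_anti_left[of s "s0 - e"] assms by (cases "s = s0 - e") auto
  then show ?thesis by simp
qed

lemma root_tendsto:
  assumes "eventually (\<lambda>h. \<bar>S h - s0\<bar> \<le> \<delta> \<and> v (S h) = h) (at_right 0)"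
  shows "filterlim (\<lambda>h. S h - s0) (at 0) (at_right 0)"
proof (rule filterlim_atI)
  show "((\<lambda>h. S h - s0) \<longlongrightarrow> 0) (at_right 0)"
  proof (rule tendstoI)
    fix e :: real assume "e > 0"
    define e' where "e' = min e \<delta>"
    have e': "0 < e'" "e' \<le> \<delta>" "e' \<le> e"
      using \<open>e > 0\<close> \<delta>_pos by (auto simp: e'_def)
    then have "min (v (s0 - e')) (v (s0 + e')) > 0"
      using v_strict_mono_right[of s0 "s0 + e'"] v_strict_anti_left[of "s0 - e'" s0] by simp
    then have "eventually (\<lambda>h. h < min (v (s0 - e')) (v (s0 + e'))) (at_right 0)"
      by (rule eventually_at_right_real[THEN eventually_mono]) simp
    with assms show "eventually (\<lambda>h. dist (S h - s0) 0 < e) (at_right 0)"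
    proof eventually_elim
      case (elim h)
      have "\<bar>S h - s0\<bar> < e'"
      proof (rule ccontr)
        assume "\<not> \<bar>S h - s0\<bar> < e'"
        then have "min (v (s0 - e')) (v (s0 + e')) \<le> h"
          using v_lower_bound[OF e'(1), of "S h"] elim by simp
        then show False
          using elim by linarith
      qed
      then show ?case
        using e' by simp
    qed
  qed
  show "eventually (\<lambda>h. S h - s0 \<noteq> 0) (at_right 0)"
    using assms eventually_small_height
  proof eventually_elim
    case (elim h)
    then show ?case
      using v_s0 by (metis eq_iff_diff_eq_0 less_irrefl)
  qed
qed

text \<open>Since v (s0 + \<sigma>) \<sim> \<kappa> \<sigma>^2 / 2, a root S h of v = h satisfies (S h - s0)^2 \<sim> 2 h / \<kappa>.\<close>

lemma root_ratio:
  assumes "eventually (\<lambda>h. \<bar>S h - s0\<bar> \<le> \<delta> \<and> v (S h) = h \<and> sgn (S h - s0) = e) (at_right 0)"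
  shows "((\<lambda>h. (S h - s0) / sqrt h) \<longlongrightarrow> e * c) (at_right 0)"
proof -
  have S: "filterlim (\<lambda>h. S h - s0) (at 0) (at_right 0)"
    using assms by (intro root_tendsto) (simp add: eventually_conj_iff)
  have "((\<lambda>h. v (s0 + (S h - s0)) / (S h - s0)\<^sup>2) \<longlongrightarrow> \<kappa> / 2) (at_right 0)"
    by (rule filterlim_compose[OF v_quadratic_lim S])
  moreover have "eventually (\<lambda>h. v (s0 + (S h - s0)) / (S h - s0)\<^sup>2 = h / (S h - s0)\<^sup>2) (at_right 0)"
    using assms by eventually_elim simp
  ultimately have "((\<lambda>h. h / (S h - s0)\<^sup>2) \<longlongrightarrow> \<kappa> / 2) (at_right 0)"
    by (rule Lim_transform_eventually)
  then have "((\<lambda>h. inverse (h / (S h - s0)\<^sup>2)) \<longlongrightarrow> inverse (\<kappa> / 2)) (at_right 0)"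
    by (rule tendsto_inverse) (use kappa_pos in simp)
  from tendsto_mult[OF tendsto_const[of e] tendsto_real_sqrt[OF this]]
  have "((\<lambda>h. e * sqrt (inverse (h / (S h - s0)\<^sup>2))) \<longlongrightarrow> e * c) (at_right 0)"
    by (simp add: c_def)
  moreover have "eventually (\<lambda>h. e * sqrt (inverse (h / (S h - s0)\<^sup>2)) = (S h - s0) / sqrt h) (at_right 0)"
    using assms eventually_small_height
  proof eventually_elim
    case (elim h)
    then have "e * \<bar>S h - s0\<bar> = S h - s0"
      using sgn_mult_abs[of "S h - s0"] by simp
    then show ?case
      using elim by (simp add: real_sqrt_divide real_sqrt_abs)
  qed
  ultimately show ?thesis
    by (rule Lim_transform_eventually)
qed

lemma eventually_two_meets:
  "eventually (\<lambda>h. \<exists>a1 a2. a1 \<noteq> a2 \<and> meet_set I X s0 h = {a1, a2}) (at_right 0)"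
  using eventually_small_height by eventually_elim (use meet_set_eq roots_distinct in blast)

lemma eventually_left_root:
  "eventually (\<lambda>h. \<bar>left_root h - s0\<bar> \<le> \<delta> \<and> v (left_root h) = h \<and> sgn (left_root h - s0) = -1)
    (at_right 0)"
  using eventually_small_height by eventually_elim (use left_root_spec in force)

lemma eventually_right_root:
  "eventually (\<lambda>h. \<bar>right_root h - s0\<bar> \<le> \<delta> \<and> v (right_root h) = h \<and> sgn (right_root h - s0) = 1)
    (at_right 0)"
  using eventually_small_height by eventually_elim (use right_root_spec in force)

lemma left_root_tendsto: "filterlim (\<lambda>h. left_root h - s0) (at 0) (at_right 0)"
  using eventually_left_root by (intro root_tendsto) (auto elim: eventually_mono)

lemma right_root_tendsto: "filterlim (\<lambda>h. right_root h - s0) (at 0) (at_right 0)"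
  using eventually_right_root by (intro root_tendsto) (auto elim: eventually_mono)

lemma left_root_ratio: "((\<lambda>h. (left_root h - s0) / sqrt h) \<longlongrightarrow> - c) (at_right 0)"
  using root_ratio[OF eventually_left_root] by simp

lemma right_root_ratio: "((\<lambda>h. (right_root h - s0) / sqrt h) \<longlongrightarrow> c) (at_right 0)"
  using root_ratio[OF eventually_right_root] by simp

lemma u_left_lim: "((\<lambda>h. u (left_root h) / sqrt h) \<longlongrightarrow> - c) (at_right 0)"
  using tendsto_ratio_along[OF u_quotient_lim left_root_tendsto left_root_ratio] by simp

lemma u_right_lim: "((\<lambda>h. u (right_root h) / sqrt h) \<longlongrightarrow> c) (at_right 0)"
  using tendsto_ratio_along[OF u_quotient_lim right_root_tendsto right_root_ratio] by simp

lemma q_left_lim: "((\<lambda>h. q (left_root h) / sqrt h) \<longlongrightarrow> - \<kappa> * c) (at_right 0)"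
  using tendsto_ratio_along[OF q_quotient_lim left_root_tendsto left_root_ratio] by simp

lemma q_right_lim: "((\<lambda>h. q (right_root h) / sqrt h) \<longlongrightarrow> \<kappa> * c) (at_right 0)"
  using tendsto_ratio_along[OF q_quotient_lim right_root_tendsto right_root_ratio] by simp

lemma p_left_lim: "((\<lambda>h. p (left_root h)) \<longlongrightarrow> 1) (at_right 0)"
  using filterlim_compose[OF p_lim left_root_tendsto] by simp

lemma p_right_lim: "((\<lambda>h. p (right_root h)) \<longlongrightarrow> 1) (at_right 0)"
  using filterlim_compose[OF p_lim right_root_tendsto] by simp

lemma T_area_lim: "((\<lambda>h. T_area I X s0 h / (h * sqrt h)) \<longlongrightarrow> c) (at_right 0)"
proof -
  have "((\<lambda>h. \<bar>u (right_root h) / sqrt h - u (left_root h) / sqrt h\<bar> / 2) \<longlongrightarrow> \<bar>c - - c\<bar> / 2)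
      (at_right 0)"
    by (intro tendsto_intros u_left_lim u_right_lim) simp
  moreover have "eventually (\<lambda>h. \<bar>u (right_root h) / sqrt h - u (left_root h) / sqrt h\<bar> / 2
      = T_area I X s0 h / (h * sqrt h)) (at_right 0)"
    using eventually_small_height
  proof eventually_elim
    case (elim h)
    then show ?case
      by (simp add: T_area_eq diff_divide_distrib[symmetric] abs_divide)
  qed
  ultimately show ?thesis
    using c_pos by (simp add: Lim_transform_eventually)
qed

lemma U_area_lim: "((\<lambda>h. U_area I X s0 h / (h * sqrt h)) \<longlongrightarrow> c / 2) (at_right 0)"
proof -
  let ?L = "\<lambda>h. left_root h" and ?R = "\<lambda>h. right_root h"
  have lim: "((\<lambda>h. tangent_triangle_area 1 (u (?L h) / sqrt h) (u (?R h) / sqrt h) (p (?L h)) (p (?R h))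
      (q (?L h) / sqrt h) (q (?R h) / sqrt h))
      \<longlongrightarrow> tangent_triangle_area 1 (- c) c 1 1 (- \<kappa> * c) (\<kappa> * c)) (at_right 0)"
    using kappa_pos c_pos
    by (intro tendsto_tangent_triangle_area u_left_lim u_right_lim p_left_lim p_right_lim
        q_left_lim q_right_lim) auto
  have limit_value: "tangent_triangle_area 1 (- c) c 1 1 (- \<kappa> * c) (\<kappa> * c) = c / 2"
  proof -
    have "1 / (\<kappa> * c) = c / 2"
      using kappa_c_sq kappa_pos c_pos by (simp add: field_simps power2_eq_square)
    then show ?thesis
      using kappa_c_sq kappa_pos c_pos
      by (simp add: tangent_triangle_area_def field_simps power2_eq_square)
  qed
  have "eventually (\<lambda>h. tangent_triangle_area 1 (u (?L h) / sqrt h) (u (?R h) / sqrt h)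
      (p (?L h)) (p (?R h)) (q (?L h) / sqrt h) (q (?R h) / sqrt h) = U_area I X s0 h / (h * sqrt h))
      (at_right 0)"
    using eventually_small_height
  proof eventually_elim
    case (elim h)
    define r where "r = sqrt h"
    have r: "r > 0" "r\<^sup>2 = h" "r ^ 3 = h * sqrt h"
      using elim by (simp_all add: r_def power3_eq_cube power2_eq_square)
    have "U_area I X s0 h = tangent_triangle_area (r\<^sup>2) (r * (u (?L h) / r)) (r * (u (?R h) / r))
        (p (?L h)) (p (?R h)) (r * (q (?L h) / r)) (r * (q (?R h) / r))"
      using U_area_eq elim r by simp
    also have "\<dots> = r ^ 3 * tangent_triangle_area 1 (u (?L h) / r) (u (?R h) / r)
        (p (?L h)) (p (?R h)) (q (?L h) / r) (q (?R h) / r)"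
      by (rule tangent_triangle_area_scale[OF r(1)])
    finally show ?case
      using r by (simp add: r_def)
  qed
  from Lim_transform_eventually[OF lim this] show ?thesis
    unfolding limit_value .
qed

end

lemma strictly_convex_curve_convex_arc_at:
  assumes "strictly_convex_curve I X" "s0 \<in> I"
  obtains X1 X2 where "convex_arc_at I X X1 X2 s0"
proof -
  obtain X1 X2 X3 where d: "\<forall>s\<in>I. (X has_vector_derivative X1 s) (at s)
      \<and> (X1 has_vector_derivative X2 s) (at s) \<and> (X2 has_vector_derivative X3 s) (at s)"
    using assms(1) unfolding strictly_convex_curve_def C3_on_def by blast
  have "D1 X s = X1 s" if "s \<in> I" for s
    using d that by (simp add: D1_def vector_derivative_at)
  then have "convex_arc_at I X X1 X2 s0"
    using assms d by unfold_locales
      (auto simp: strictly_convex_curve_def intro: has_vector_derivative_continuous)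
  then show thesis ..
qed

theorem theorem1:
  fixes I :: "real set" and X :: "real \<Rightarrow> real^2" and s0 :: real
  assumes "strictly_convex_curve I X" and "s0 \<in> I"
  shows "eventually (\<lambda>h. \<exists>a1 a2. a1 \<noteq> a2 \<and> meet_set I X s0 h = {a1, a2}) (at_right 0)
    \<and> ((\<lambda>h. T_area I X s0 h / (h * sqrt h)) \<longlongrightarrow> sqrt 2 / sqrt (curvature I X s0)) (at_right 0)
    \<and> ((\<lambda>h. U_area I X s0 h / (h * sqrt h)) \<longlongrightarrow> sqrt 2 / (2 * sqrt (curvature I X s0))) (at_right 0)"
proof -
  obtain X1 X2 where "convex_arc_at I X X1 X2 s0"
    using strictly_convex_curve_convex_arc_at[OF assms] .
  then interpret convex_arc_at I X X1 X2 s0 .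
  obtain \<delta> where "\<delta> > 0" "\<forall>s. \<bar>s - s0\<bar> \<le> \<delta> \<longrightarrow> s \<in> I \<and> p s > 0 \<and> X2 s \<bullet> N0 > 0"
    using exists_window by blast
  then interpret convex_arc_window I X X1 X2 s0 \<delta>
    by unfold_locales auto
  have "c = sqrt 2 / sqrt (curvature I X s0)"
    by (simp add: c_def \<kappa>_def real_sqrt_divide)
  then show ?thesis
    using eventually_two_meets T_area_lim U_area_lim by (simp add: mult.commute)
qed

end
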